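(* The quadric surface $Q$ meets the octic $R$ only within the singular locus of $R$; in fact $$Q\cap R\subset S_{(x_0,x_1)}\cup S_{(x_0,x_2)}\cup S_{(x_1,x_2)}\cup S_{(x_3,x_4)}.$$
   Context: Let $\Delta'(x_0,\ldots,x_4):=\prod_{i_1,\ldots,i_4\in\{0,1\}}\big(\sqrt{x_0}+(-1)^{i_1}\sqrt{x_1}+\cdots+(-1)^{i_4}\sqrt{x_4}\big)\in\mathbb{Q}[x_0,\ldots,x_4]$ (degree $8$), and let $R\subset\mathbf{P}^4$ be the octic threefold $\Delta'=0$. $Q\subset\mathbf{P}^4$ is the quadric surface $l=q=0$ with $l:=x_0+x_1+x_2-3x_3-3x_4$ and $q:=x_0^2+x_1^2+x_2^2+9x_3^2-x_0x_1-x_0x_2-3x_0x_3-x_1x_2-3x_1x_3-3x_2x_3$. For $0\le i<j\le4$, $S_{(x_i,x_j)}\subset\mathbf{P}^4$ is the surface given by $x_i=x_j$ and $x_k^2+x_l^2+x_m^2-2x_kx_l-2x_kx_m-2x_lx_m=0$, where $\{k,l,m\}=\{0,\ldots,4\}\setminus\{i,j\}$. *)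

theory Defs
  imports Complex_Main
begin

definition sgn_bool :: "bool \<Rightarrow> complex" where
  "sgn_bool b = (if b then -1 else 1)"

text \<open>The product is invariant under the choice of
  square roots, so it is the value of the polynomial Delta'.\<close>
definition Delta' :: "complex \<Rightarrow> complex \<Rightarrow> complex \<Rightarrow> complex \<Rightarrow> complex \<Rightarrow> complex" where
  "Delta' x0 x1 x2 x3 x4 =
     (\<Prod>e \<in> (UNIV :: (bool \<times> bool \<times> bool \<times> bool) set).
        csqrt x0 + sgn_bool (fst e) * csqrt x1 + sgn_bool (fst (snd e)) * csqrt x2
        + sgn_bool (fst (snd (snd e))) * csqrt x3 + sgn_bool (snd (snd (snd e))) * csqrt x4)"

definition lQ :: "complex \<Rightarrow> complex \<Rightarrow> complex \<Rightarrow> complex \<Rightarrow> complex \<Rightarrow> complex" where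
  "lQ x0 x1 x2 x3 x4 = x0 + x1 + x2 - 3*x3 - 3*x4"

definition qQ :: "complex \<Rightarrow> complex \<Rightarrow> complex \<Rightarrow> complex \<Rightarrow> complex \<Rightarrow> complex" where
  "qQ x0 x1 x2 x3 x4 = x0^2 + x1^2 + x2^2 + 9*x3^2 - x0*x1 - x0*x2 - 3*x0*x3
      - x1*x2 - 3*x1*x3 - 3*x2*x3"

definition qS :: "complex \<Rightarrow> complex \<Rightarrow> complex \<Rightarrow> complex" where
  "qS a b c = a^2 + b^2 + c^2 - 2*a*b - 2*a*c - 2*b*c"

definition sing_R :: "complex \<Rightarrow> complex \<Rightarrow> complex \<Rightarrow> complex \<Rightarrow> complex \<Rightarrow> bool" where
  "sing_R x0 x1 x2 x3 x4 \<longleftrightarrow> Delta' x0 x1 x2 x3 x4 = 0 \<and>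
     ((\<lambda>t. Delta' (x0 + t) x1 x2 x3 x4) has_field_derivative 0) (at 0) \<and>
     ((\<lambda>t. Delta' x0 (x1 + t) x2 x3 x4) has_field_derivative 0) (at 0) \<and>
     ((\<lambda>t. Delta' x0 x1 (x2 + t) x3 x4) has_field_derivative 0) (at 0) \<and>
     ((\<lambda>t. Delta' x0 x1 x2 (x3 + t) x4) has_field_derivative 0) (at 0) \<and>
     ((\<lambda>t. Delta' x0 x1 x2 x3 (x4 + t)) has_field_derivative 0) (at 0)"

end

(*
  Pair the 16 factors of Delta' that differ only in the sign of csqrt x_i (for x0: in all four
  signs). The product of a pair is affine in x_i, so Delta' with x_i perturbed by t is a product
  of eight affine functions of t, and its derivative vanishes at t = 0 as soon as two factors from
  different pairs vanish. This sidesteps the branch cut of csqrt entirely.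

  At a point of R some factor vanishes: b0 + ... + b4 = 0 with b_i^2 = x_i. Substituting
  b4 = -(b0 + ... + b3) into the equations of Q shows (b0+b1)(b0+b2)(b1+b2)(b3+b4) = 0, so the
  b_i split into a vanishing pair and a vanishing triple. The pair gives x_i = x_j and the triple
  gives the quadric of the corresponding S. Flipping the signs of the block not containing b0
  gives a second vanishing factor, and it flips two or three signs, so it lies in a different pair
  than the first factor for every variable.
*)

theory Submission
  imports Defs "HOL-Library.Product_Lexorder"
begin

lemma has_field_derivative_prod_affine_double_zero:
  fixes c :: "'a \<Rightarrow> 'b::real_normed_field"
  assumes "finite A" "a \<in> A" "b \<in> A" "a \<noteq> b" "c a = 0" "c b = 0"
  shows "((\<lambda>t. \<Prod>x\<in>A. c x + k * t) has_field_derivative 0) (at 0)"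
proof -
  have "((\<lambda>t. \<Prod>x\<in>A. c x + k * t) has_field_derivative
          (\<Sum>x\<in>A. k * (\<Prod>y\<in>A-{x}. c y + k * 0))) (at 0)"
    by (rule has_field_derivative_prod) (auto intro!: derivative_eq_intros)
  moreover have "(\<Prod>y\<in>A-{x}. c y + k * 0) = 0" if "x \<in> A" for x
    using assms by (cases "x = a") (auto intro!: prod_zero)
  ultimately show ?thesis by simp
qed

lemma prod_involution_pairs:
  fixes \<sigma> :: "'a::linorder \<Rightarrow> 'a"
  assumes "finite A" "\<sigma> ` A \<subseteq> A"
    and "\<And>a. a \<in> A \<Longrightarrow> \<sigma> (\<sigma> a) = a" "\<And>a. a \<in> A \<Longrightarrow> \<sigma> a \<noteq> a"
  shows "(\<Prod>a\<in>A. f a) = (\<Prod>a\<in>{a\<in>A. a < \<sigma> a}. f a * f (\<sigma> a))"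
proof -
  let ?H = "{a\<in>A. a < \<sigma> a}"
  have A: "A = ?H \<union> \<sigma> ` ?H"
  proof (intro equalityI subsetI)
    fix a assume a: "a \<in> A"
    show "a \<in> ?H \<union> \<sigma> ` ?H"
    proof (cases "a < \<sigma> a")
      case False
      then have "\<sigma> a < \<sigma> (\<sigma> a)" using assms(3,4)[OF a] by auto
      then show ?thesis using a assms(2,3) by (auto intro!: image_eqI[of a \<sigma> "\<sigma> a"])
    qed (use a in auto)
  qed (use assms(2) in auto)
  have "?H \<inter> \<sigma> ` ?H = {}" using assms(3) by fastforce
  moreover have "inj_on \<sigma> ?H" by (metis (no_types, lifting) assms(3) inj_onI mem_Collect_eq)
  ultimately have "(\<Prod>a\<in>A. f a) = (\<Prod>a\<in>?H. f a) * (\<Prod>a\<in>?H. f (\<sigma> a))"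
    using assms(1) by (subst A, subst prod.union_disjoint) (auto simp: prod.reindex)
  then show ?thesis by (simp add: prod.distrib)
qed

lemma has_field_derivative_prod_paired_double_zero:
  fixes F :: "'a::linorder \<Rightarrow> 'b::real_normed_field \<Rightarrow> 'b"
  assumes "finite A" "\<sigma> ` A \<subseteq> A"
    and "\<And>x. x \<in> A \<Longrightarrow> \<sigma> (\<sigma> x) = x" "\<And>x. x \<in> A \<Longrightarrow> \<sigma> x \<noteq> x"
    and pair: "\<And>x t. x \<in> A \<Longrightarrow> F x t * F (\<sigma> x) t = c x + k * t"
    and "a \<in> A" "b \<in> A" "F a 0 = 0" "F b 0 = 0" "b \<noteq> a" "b \<noteq> \<sigma> a"
  shows "((\<lambda>t. \<Prod>x\<in>A. F x t) has_field_derivative 0) (at 0)"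
proof -
  let ?H = "{x\<in>A. x < \<sigma> x}"
  define r where "r x = min x (\<sigma> x)" for x
  have prod_eq: "(\<Prod>x\<in>A. F x t) = (\<Prod>x\<in>?H. c x + k * t)" for t
  proof -
    have "(\<Prod>x\<in>A. F x t) = (\<Prod>x\<in>?H. F x t * F (\<sigma> x) t)"
      by (rule prod_involution_pairs[OF assms(1-4)])
    also have "\<dots> = (\<Prod>x\<in>?H. c x + k * t)"
      by (rule prod.cong) (auto simp: pair)
    finally show ?thesis .
  qed
  have c_zero: "c x = 0" "c (\<sigma> x) = 0" if "x \<in> A" "F x 0 = 0" for x
    using that assms(2,3) pair[of x 0] pair[of "\<sigma> x" 0] by (auto simp: mult.commute)
  have r: "r x \<in> ?H" "c (r x) = 0" if "x \<in> A" "F x 0 = 0" for x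
  proof -
    have "\<sigma> x \<in> A" "\<sigma> (\<sigma> x) = x" "\<sigma> x \<noteq> x" using that(1) assms(2-4) by auto
    then show "r x \<in> ?H" "c (r x) = 0"
      using that c_zero by (auto simp: r_def min_def less_le)
  qed
  have "r a \<noteq> r b"
    using assms(3,6,7,10,11) by (auto simp: r_def min_def split: if_splits) (metis assms(3))
  then show ?thesis
    unfolding prod_eq using assms(1,6-9) r
    by (intro has_field_derivative_prod_affine_double_zero[where a = "r a" and b = "r b"]) auto
qed

type_synonym signs = "bool \<times> bool \<times> bool \<times> bool"

definition Delta'_factor ::
    "signs \<Rightarrow> complex \<Rightarrow> complex \<Rightarrow> complex \<Rightarrow> complex \<Rightarrow> complex \<Rightarrow> complex" where
  "Delta'_factor e x0 x1 x2 x3 x4 =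
     csqrt x0 + sgn_bool (fst e) * csqrt x1 + sgn_bool (fst (snd e)) * csqrt x2
     + sgn_bool (fst (snd (snd e))) * csqrt x3 + sgn_bool (snd (snd (snd e))) * csqrt x4"

lemma Delta'_eq_prod_factor:
  "Delta' x0 x1 x2 x3 x4 = (\<Prod>e\<in>UNIV. Delta'_factor e x0 x1 x2 x3 x4)"
  unfolding Delta'_def Delta'_factor_def ..

lemma Delta'_factor_expand:
  "Delta'_factor (e1, e2, e3, e4) x0 x1 x2 x3 x4 =
     csqrt x0 + sgn_bool e1 * csqrt x1 + sgn_bool e2 * csqrt x2 + sgn_bool e3 * csqrt x3
     + sgn_bool e4 * csqrt x4"
  by (simp add: Delta'_factor_def)

fun flip_signs :: "signs \<Rightarrow> signs \<Rightarrow> signs" where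
  "flip_signs (d1, d2, d3, d4) (e1, e2, e3, e4) = (d1 \<noteq> e1, d2 \<noteq> e2, d3 \<noteq> e3, d4 \<noteq> e4)"

lemma flip_signs_flip_signs [simp]: "flip_signs d (flip_signs d e) = e"
  by (cases d; cases e) auto

lemma flip_signs_eq_iff [simp]: "flip_signs d e = flip_signs d' e \<longleftrightarrow> d = d'"
  by (cases d; cases d'; cases e) auto

lemma flip_signs_eq_self_iff [simp]: "flip_signs d e = e \<longleftrightarrow> d = (False, False, False, False)"
  by (cases d; cases e) auto

lemma csqrt_mult_self: "csqrt x * csqrt x = x"
  by (metis power2_csqrt power2_eq_square)

lemma Delta'_factor_pair0:
  "Delta'_factor e x0 x1 x2 x3 x4 * Delta'_factor (flip_signs (True, True, True, True) e) x0 x1 x2 x3 x4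
     = x0 - (Delta'_factor e 0 x1 x2 x3 x4)\<^sup>2"
  by (cases e) (auto simp: Delta'_factor_expand sgn_bool_def power2_eq_square algebra_simps
      csqrt_mult_self)

lemma Delta'_factor_pair1:
  "Delta'_factor e x0 x1 x2 x3 x4 * Delta'_factor (flip_signs (True, False, False, False) e) x0 x1 x2 x3 x4
     = (Delta'_factor e x0 0 x2 x3 x4)\<^sup>2 - x1"
  by (cases e) (auto simp: Delta'_factor_expand sgn_bool_def power2_eq_square algebra_simps
      csqrt_mult_self)

lemma Delta'_factor_pair2:
  "Delta'_factor e x0 x1 x2 x3 x4 * Delta'_factor (flip_signs (False, True, False, False) e) x0 x1 x2 x3 x4
     = (Delta'_factor e x0 x1 0 x3 x4)\<^sup>2 - x2"
  by (cases e) (auto simp: Delta'_factor_expand sgn_bool_def power2_eq_square algebra_simps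
      csqrt_mult_self)

lemma Delta'_factor_pair3:
  "Delta'_factor e x0 x1 x2 x3 x4 * Delta'_factor (flip_signs (False, False, True, False) e) x0 x1 x2 x3 x4
     = (Delta'_factor e x0 x1 x2 0 x4)\<^sup>2 - x3"
  by (cases e) (auto simp: Delta'_factor_expand sgn_bool_def power2_eq_square algebra_simps
      csqrt_mult_self)

lemma Delta'_factor_pair4:
  "Delta'_factor e x0 x1 x2 x3 x4 * Delta'_factor (flip_signs (False, False, False, True) e) x0 x1 x2 x3 x4
     = (Delta'_factor e x0 x1 x2 x3 0)\<^sup>2 - x4"
  by (cases e) (auto simp: Delta'_factor_expand sgn_bool_def power2_eq_square algebra_simps
      csqrt_mult_self)

lemma zero_sum_square_roots_on_Q:
  fixes b0 b1 b2 b3 b4 :: complex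
  assumes "b0 + b1 + b2 + b3 + b4 = 0"
    and "lQ (b0\<^sup>2) (b1\<^sup>2) (b2\<^sup>2) (b3\<^sup>2) (b4\<^sup>2) = 0"
    and "qQ (b0\<^sup>2) (b1\<^sup>2) (b2\<^sup>2) (b3\<^sup>2) (b4\<^sup>2) = 0"
  shows "(b0 + b1) * (b0 + b2) * (b1 + b2) * (b3 + b4) = 0"
proof -
  have "b4 = - (b0 + b1 + b2 + b3)"
    using assms(1) by (simp add: eq_neg_iff_add_eq_0 algebra_simps)
  then show ?thesis
    using assms(2,3) unfolding lQ_def qQ_def by algebra
qed

lemma zero_sum_square_roots_on_Q_cases:
  fixes b0 b1 b2 b3 b4 :: complex
  assumes "b0 + b1 + b2 + b3 + b4 = 0"
    and "lQ (b0\<^sup>2) (b1\<^sup>2) (b2\<^sup>2) (b3\<^sup>2) (b4\<^sup>2) = 0"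
    and "qQ (b0\<^sup>2) (b1\<^sup>2) (b2\<^sup>2) (b3\<^sup>2) (b4\<^sup>2) = 0"
  obtains "b0 + b1 = 0" "b2 + b3 + b4 = 0" | "b0 + b2 = 0" "b1 + b3 + b4 = 0"
    | "b1 + b2 = 0" "b0 + b3 + b4 = 0" | "b3 + b4 = 0" "b0 + b1 + b2 = 0"
proof -
  have "b0 + b1 = 0 \<or> b0 + b2 = 0 \<or> b1 + b2 = 0 \<or> b3 + b4 = 0"
    using zero_sum_square_roots_on_Q[OF assms] by simp
  then show thesis
  proof (elim disjE)
    assume pair: "b0 + b1 = 0"
    show thesis by (rule that(1)[OF pair]) (use pair assms(1) in algebra)
  next
    assume pair: "b0 + b2 = 0"
    show thesis by (rule that(2)[OF pair]) (use pair assms(1) in algebra)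
  next
    assume pair: "b1 + b2 = 0"
    show thesis by (rule that(3)[OF pair]) (use pair assms(1) in algebra)
  next
    assume pair: "b3 + b4 = 0"
    show thesis by (rule that(4)[OF pair]) (use pair assms(1) in algebra)
  qed
qed

lemma qS_squares_eq_0: "a + b + c = 0 \<Longrightarrow> qS (a\<^sup>2) (b\<^sup>2) (c\<^sup>2) = 0" for a b c :: complex
  unfolding qS_def by (simp add: add_eq_0_iff2 eq_neg_iff_add_eq_0[symmetric] algebra_simps) algebra

text \<open>The excluded masks are the identity and the five pairing involutions used below.\<close>
definition flips_two_or_three :: "signs \<Rightarrow> bool" where
  "flips_two_or_three d \<longleftrightarrow>
     d \<notin> {(False, False, False, False), (True, True, True, True), (True, False, False, False),
           (False, True, False, False), (False, False, True, False), (False, False, False, True)}"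

lemma sing_R_if_two_zero_factors:
  assumes e: "Delta'_factor e x0 x1 x2 x3 x4 = 0"
    and e': "Delta'_factor (flip_signs d e) x0 x1 x2 x3 x4 = 0"
    and d: "flips_two_or_three d"
  shows "sing_R x0 x1 x2 x3 x4"
proof -
  have paired: "((\<lambda>t. \<Prod>a\<in>UNIV. F a t) has_field_derivative 0) (at 0)"
    if "m \<in> {(True, True, True, True), (True, False, False, False), (False, True, False, False),
               (False, False, True, False), (False, False, False, True)}"
      and "\<And>a t. F a t * F (flip_signs m a) t = c a + k * t" "F e 0 = 0" "F (flip_signs d e) 0 = 0"
    for m and F :: "signs \<Rightarrow> complex \<Rightarrow> complex" and c k
    using that d unfolding flips_two_or_three_def
    by (intro has_field_derivative_prod_paired_double_zero[where \<sigma> = "flip_signs m" and a = e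
          and b = "flip_signs d e"]) auto
  have "Delta' x0 x1 x2 x3 x4 = 0"
    unfolding Delta'_eq_prod_factor using e by (intro prod_zero finite_UNIV) blast
  moreover have "((\<lambda>t. Delta' (x0 + t) x1 x2 x3 x4) has_field_derivative 0) (at 0)"
    unfolding Delta'_eq_prod_factor
    by (rule paired[where m = "(True, True, True, True)"
          and c = "\<lambda>a. x0 - (Delta'_factor a 0 x1 x2 x3 x4)\<^sup>2" and k = 1])
      (use e e' in \<open>simp_all add: Delta'_factor_pair0\<close>)
  moreover have "((\<lambda>t. Delta' x0 (x1 + t) x2 x3 x4) has_field_derivative 0) (at 0)"
    unfolding Delta'_eq_prod_factor
    by (rule paired[where m = "(True, False, False, False)"
          and c = "\<lambda>a. (Delta'_factor a x0 0 x2 x3 x4)\<^sup>2 - x1" and k = "-1"])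
      (use e e' in \<open>simp_all add: Delta'_factor_pair1\<close>)
  moreover have "((\<lambda>t. Delta' x0 x1 (x2 + t) x3 x4) has_field_derivative 0) (at 0)"
    unfolding Delta'_eq_prod_factor
    by (rule paired[where m = "(False, True, False, False)"
          and c = "\<lambda>a. (Delta'_factor a x0 x1 0 x3 x4)\<^sup>2 - x2" and k = "-1"])
      (use e e' in \<open>simp_all add: Delta'_factor_pair2\<close>)
  moreover have "((\<lambda>t. Delta' x0 x1 x2 (x3 + t) x4) has_field_derivative 0) (at 0)"
    unfolding Delta'_eq_prod_factor
    by (rule paired[where m = "(False, False, True, False)"
          and c = "\<lambda>a. (Delta'_factor a x0 x1 x2 0 x4)\<^sup>2 - x3" and k = "-1"])
      (use e e' in \<open>simp_all add: Delta'_factor_pair3\<close>)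
  moreover have "((\<lambda>t. Delta' x0 x1 x2 x3 (x4 + t)) has_field_derivative 0) (at 0)"
    unfolding Delta'_eq_prod_factor
    by (rule paired[where m = "(False, False, False, True)"
          and c = "\<lambda>a. (Delta'_factor a x0 x1 x2 x3 0)\<^sup>2 - x4" and k = "-1"])
      (use e e' in \<open>simp_all add: Delta'_factor_pair4\<close>)
  ultimately show ?thesis
    unfolding sing_R_def by blast
qed

lemma zero_factor_on_Q:
  assumes e: "Delta'_factor (e1, e2, e3, e4) x0 x1 x2 x3 x4 = 0"
    and "lQ x0 x1 x2 x3 x4 = 0" "qQ x0 x1 x2 x3 x4 = 0"
  obtains d where "flips_two_or_three d"
    and "Delta'_factor (flip_signs d (e1, e2, e3, e4)) x0 x1 x2 x3 x4 = 0"
    and "(x0 = x1 \<and> qS x2 x3 x4 = 0) \<or> (x0 = x2 \<and> qS x1 x3 x4 = 0) \<or>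
         (x1 = x2 \<and> qS x0 x3 x4 = 0) \<or> (x3 = x4 \<and> qS x0 x1 x2 = 0)"
proof -
  define b0 b1 b2 b3 b4 where "b0 = csqrt x0" "b1 = sgn_bool e1 * csqrt x1"
    "b2 = sgn_bool e2 * csqrt x2" "b3 = sgn_bool e3 * csqrt x3" "b4 = sgn_bool e4 * csqrt x4"
  note b = this
  have x: "x0 = b0\<^sup>2" "x1 = b1\<^sup>2" "x2 = b2\<^sup>2" "x3 = b3\<^sup>2" "x4 = b4\<^sup>2"
    by (simp_all add: b power_mult_distrib sgn_bool_def)
  have flip: "Delta'_factor (flip_signs (d1, d2, d3, d4) (e1, e2, e3, e4)) x0 x1 x2 x3 x4
      = b0 + sgn_bool d1 * b1 + sgn_bool d2 * b2 + sgn_bool d3 * b3 + sgn_bool d4 * b4" for d1 d2 d3 d4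
    by (simp add: Delta'_factor_expand b sgn_bool_def)
  have sum: "b0 + b1 + b2 + b3 + b4 = 0"
    using e by (simp add: Delta'_factor_expand b)
  from zero_sum_square_roots_on_Q_cases[OF sum assms(2,3)[unfolded x]] show thesis
  proof cases
    case 1
    show thesis
    proof (rule that[of "(False, True, True, True)"])
      show "Delta'_factor (flip_signs (False, True, True, True) (e1, e2, e3, e4)) x0 x1 x2 x3 x4 = 0"
        using 1 unfolding flip by (simp add: sgn_bool_def) algebra
    qed (use 1 qS_squares_eq_0[OF 1(2)] in
        \<open>simp_all add: x flips_two_or_three_def power2_eq_iff add_eq_0_iff2\<close>)
  next
    case 2
    show thesis
    proof (rule that[of "(True, False, True, True)"])
      show "Delta'_factor (flip_signs (True, False, True, True) (e1, e2, e3, e4)) x0 x1 x2 x3 x4 = 0"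
        using 2 unfolding flip by (simp add: sgn_bool_def) algebra
    qed (use 2 qS_squares_eq_0[OF 2(2)] in
        \<open>simp_all add: x flips_two_or_three_def power2_eq_iff add_eq_0_iff2\<close>)
  next
    case 3
    show thesis
    proof (rule that[of "(True, True, False, False)"])
      show "Delta'_factor (flip_signs (True, True, False, False) (e1, e2, e3, e4)) x0 x1 x2 x3 x4 = 0"
        using 3 unfolding flip by (simp add: sgn_bool_def) algebra
    qed (use 3 qS_squares_eq_0[OF 3(2)] in
        \<open>simp_all add: x flips_two_or_three_def power2_eq_iff add_eq_0_iff2\<close>)
  next
    case 4
    show thesis
    proof (rule that[of "(False, False, True, True)"])
      show "Delta'_factor (flip_signs (False, False, True, True) (e1, e2, e3, e4)) x0 x1 x2 x3 x4 = 0"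
        using 4 unfolding flip by (simp add: sgn_bool_def) algebra
    qed (use 4 qS_squares_eq_0[OF 4(2)] in
        \<open>simp_all add: x flips_two_or_three_def power2_eq_iff add_eq_0_iff2\<close>)
  qed
qed

theorem mainTheorem12:
  fixes x0 x1 x2 x3 x4 :: complex
  assumes "\<not> (x0 = 0 \<and> x1 = 0 \<and> x2 = 0 \<and> x3 = 0 \<and> x4 = 0)"
    and "lQ x0 x1 x2 x3 x4 = 0" and "qQ x0 x1 x2 x3 x4 = 0"
    and "Delta' x0 x1 x2 x3 x4 = 0"
  shows "sing_R x0 x1 x2 x3 x4 \<and>
    ((x0 = x1 \<and> qS x2 x3 x4 = 0) \<or> (x0 = x2 \<and> qS x1 x3 x4 = 0) \<or>
     (x1 = x2 \<and> qS x0 x3 x4 = 0) \<or> (x3 = x4 \<and> qS x0 x1 x2 = 0))"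
proof -
  obtain e1 e2 e3 e4 where e: "Delta'_factor (e1, e2, e3, e4) x0 x1 x2 x3 x4 = 0"
    using assms(4) unfolding Delta'_eq_prod_factor by (auto simp: prod_zero_iff)
  obtain d where "flips_two_or_three d"
    and "Delta'_factor (flip_signs d (e1, e2, e3, e4)) x0 x1 x2 x3 x4 = 0"
    and S: "(x0 = x1 \<and> qS x2 x3 x4 = 0) \<or> (x0 = x2 \<and> qS x1 x3 x4 = 0) \<or>
            (x1 = x2 \<and> qS x0 x3 x4 = 0) \<or> (x3 = x4 \<and> qS x0 x1 x2 = 0)"
    using zero_factor_on_Q[OF e assms(2,3)] by blast
  then have "sing_R x0 x1 x2 x3 x4"
    using sing_R_if_two_zero_factors[OF e] by blast
  with S show ?thesis by blast
qed

end
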